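(* Consider an $(n,k)$ sampling mix with arrival rate $\lambda>0$ per sender and parameter $p_a \in [0,1]$. In steady state, the average load of any given queue (the long-run fraction of time it is non-empty) equals \[ \rho = \frac{1-p_a}{k-p_a}, \] and the average delay experienced by a message (mean time between its arrival to the mix and its departure) equals \[ \frac{1-p_a}{\lambda(k-1)}. \]
   Context: An $(n,k)$ sampling mix (integers $n$, $k$ with $2 \le k \le n-1$) consists of $n$ first-in first-out queues with infinite buffers; queue $i$ receives messages from its own sender according to a Poisson process of rate $\lambda$, the $n$ arrival processes being independent. Each sender communicates with its own set of at most $m$ receivers, these sets being disjoint. At each message arrival (say to queue $j$), $k$ queues are selected and "released", where releasing a queue means it forwards (instantly) the message at its head if it is non-empty, and does nothing if it is empty. The selection is: with probability $p_a$, queue $j$ is selected together with $k-1$ queues chosen uniformly at random from the other $n-1$ queues; with probability $1-p_a$, queue $j$ is not selected and $k$ queues are chosen uniformly at random from the other $n-1$ queues. Delay consists only of queueing time in the mix. *)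

theory Defs
  imports "HOL-Probability.Probability"
begin

text \<open>State of the mix: list of the n queue lengths (queues indexed 0..n-1).
  The continuous-time system is described through its jump chain: arrivals to the
  mix form a Poisson process of rate n*lam (superposition of the n senders), each
  arrival going to a uniformly chosen queue, independently of the state.\<close>

definition arrive :: "nat \<Rightarrow> nat list \<Rightarrow> nat list" where
  "arrive j s = s[j := s ! j + 1]"

definition release :: "nat set \<Rightarrow> nat list \<Rightarrow> nat list" where
  "release S s = map (\<lambda>i. if i \<in> S then s ! i - 1 else s ! i) [0..<length s]"

definition selection :: "nat \<Rightarrow> nat \<Rightarrow> real \<Rightarrow> nat \<Rightarrow> nat set pmf" where
  "selection n k pa j =
     bind_pmf (bernoulli_pmf pa) (\<lambda>b.
       if b then map_pmf (insert j) (pmf_of_set {S. S \<subseteq> {..<n} - {j} \<and> card S = k - 1})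
       else pmf_of_set {S. S \<subseteq> {..<n} - {j} \<and> card S = k})"

definition mix_step :: "nat \<Rightarrow> nat \<Rightarrow> real \<Rightarrow> nat list \<Rightarrow> nat list pmf" where
  "mix_step n k pa s =
     bind_pmf (pmf_of_set {..<n}) (\<lambda>j.
       map_pmf (\<lambda>S. release S (arrive j s)) (selection n k pa j))"

definition steady_state :: "nat \<Rightarrow> nat \<Rightarrow> real \<Rightarrow> nat list pmf \<Rightarrow> bool" where
  "steady_state n k pa \<pi> \<longleftrightarrow>
     (\<forall>s\<in>set_pmf \<pi>. length s = n) \<and> bind_pmf \<pi> (mix_step n k pa) = \<pi>"

definition queue_load :: "nat list pmf \<Rightarrow> nat \<Rightarrow> real" where
  "queue_load \<pi> i = measure_pmf.prob \<pi> {s. 0 < s ! i}"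

text \<open>Tagged message: Some (q, m) means it sits in queue q with m messages ahead of it;
  None means it has left the mix.\<close>
definition tag_update :: "nat set \<Rightarrow> (nat \<times> nat) option \<Rightarrow> (nat \<times> nat) option" where
  "tag_update S p = (case p of None \<Rightarrow> None
     | Some (q, m) \<Rightarrow> if q \<in> S then (if m = 0 then None else Some (q, m - 1)) else Some (q, m))"

definition tagged_step ::
  "nat \<Rightarrow> nat \<Rightarrow> real \<Rightarrow> nat list \<times> (nat \<times> nat) option \<Rightarrow> (nat list \<times> (nat \<times> nat) option) pmf" where
  "tagged_step n k pa x =
     bind_pmf (pmf_of_set {..<n}) (\<lambda>j.
       map_pmf (\<lambda>S. (release S (arrive j (fst x)), tag_update S (snd x))) (selection n k pa j))"

text \<open>State right after the arrival event of a typical (tagged) message, arriving to the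
  mix in steady state (Poisson arrivals see the stationary distribution).\<close>
definition tagged_init ::
  "nat \<Rightarrow> nat \<Rightarrow> real \<Rightarrow> nat list pmf \<Rightarrow> (nat list \<times> (nat \<times> nat) option) pmf" where
  "tagged_init n k pa \<pi> =
     bind_pmf \<pi> (\<lambda>s. bind_pmf (pmf_of_set {..<n}) (\<lambda>j.
       map_pmf (\<lambda>S. (release S (arrive j s), tag_update S (Some (j, s ! j)))) (selection n k pa j)))"

definition tagged_dist ::
  "nat \<Rightarrow> nat \<Rightarrow> real \<Rightarrow> nat list pmf \<Rightarrow> nat \<Rightarrow> (nat list \<times> (nat \<times> nat) option) pmf" where
  "tagged_dist n k pa \<pi> t =
     ((\<lambda>d. bind_pmf d (tagged_step n k pa)) ^^ t) (tagged_init n k pa \<pi>)"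

text \<open>Probability that the tagged message is still in the mix after t further arrival events,
  i.e. P(N > t) where N is the number of further events until it departs.\<close>
definition in_mix_prob :: "nat \<Rightarrow> nat \<Rightarrow> real \<Rightarrow> nat list pmf \<Rightarrow> nat \<Rightarrow> real" where
  "in_mix_prob n k pa \<pi> t = measure_pmf.prob (tagged_dist n k pa \<pi> t) {x. snd x \<noteq> None}"

text \<open>Mean delay: E[N] times the mean inter-event time 1/(n lam) (Wald's identity; the
  inter-event times are i.i.d. exponential of rate n lam, independent of the jump chain).\<close>
definition mean_delay :: "nat \<Rightarrow> nat \<Rightarrow> real \<Rightarrow> real \<Rightarrow> nat list pmf \<Rightarrow> real" where
  "mean_delay n k lam pa \<pi> = (\<Sum>t. in_mix_prob n k pa \<pi> t) / (real n * lam)"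

end

theory Submission
  imports Defs
begin

(* Seen only at the arrival events, queue i is a lazy walk on the naturals, whatever the other
   queues do: it grows by one with probability (1 - pa)/n (the arrival joins it and it is not
   released) and shrinks by one with probability (k - pa)/n (it is released by an arrival
   elsewhere). Balancing the flow between levels y and y + 1 forces every stationary law of such a
   walk to be geometric with ratio rho = (1 - pa)/(k - pa), so the load is rho.
   A tagged message leaves once its queue has been released one more time than the number of
   messages it found ahead of it. Every event releases that queue with probability k/n,
   independently of the state, so the probability that the message is still in the mix after t
   events is k (1 - pa)/(k - pa) * (1 - k (k - 1)/(n (k - pa)))^t. The expected number of events
   n (1 - pa)/(k - 1), times the mean inter-event time 1/(n lam), is the mean delay.
   A steady state exists: the update is monotone in the state, so the mix started empty is
   stochastically increasing; its pmf converges pointwise, the geometric bounds on the queue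
   marginals make the limit a probability distribution, and since every state has finitely many
   predecessors the limit is stationary. *)

lemma measure_bind_pmf:
  "measure_pmf.prob (bind_pmf M N) X = (\<integral>x. measure_pmf.prob (N x) X \<partial>M)"
  by (simp add: measure_pmf_bind measure_pmf.measure_bind[where N="count_space UNIV"] measure_subprob)

lemma integral_indicator_comb_pmf:
  "(\<integral>x. c * indicator A x + d * indicator B x \<partial>measure_pmf M) =
     c * measure_pmf.prob M A + d * measure_pmf.prob M B"
proof -
  have "integrable (measure_pmf M) (indicator X :: _ \<Rightarrow> real)" for X
    by (rule measure_pmf.integrable_const_bound[where B=1]) (auto simp: indicator_def)
  then show ?thesis by (subst Bochner_Integration.integral_add) auto
qed

lemma measure_pmf_eq_on_superset_of_support:
  assumes "set_pmf p \<subseteq> C" "A \<inter> C = B \<inter> C"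
  shows "measure_pmf.prob p A = measure_pmf.prob p B"
proof -
  have "A \<inter> set_pmf p = B \<inter> set_pmf p" using assms by blast
  then show ?thesis by (metis measure_Int_set_pmf)
qed

lemma prob_le_of_rel_pmf_downward_closed:
  assumes "rel_pmf R p q" and "\<And>x y. R x y \<Longrightarrow> y \<in> D \<Longrightarrow> x \<in> D"
  shows "measure_pmf.prob q D \<le> measure_pmf.prob p D"
proof -
  have "rel_pmf (conversep R) q p" using assms(1) by (simp add: pmf.rel_flip)
  then have "measure_pmf.prob q D \<le> measure_pmf.prob p {x. \<exists>y\<in>D. conversep R y x}"
    by (rule rel_pmf_measureD)
  also have "\<dots> \<le> measure_pmf.prob p D"
    using assms(2) by (intro measure_pmf.finite_measure_mono) auto
  finally show ?thesis .
qed

lemma convergent_pmf_of_rel_pmf_chain: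
  assumes chain: "\<And>t. rel_pmf R (\<mu> t) (\<mu> (Suc t))"
    and R: "reflp R" "transp R" "antisymp R"
  shows "convergent (\<lambda>t. pmf (\<mu> t) x)"
proof -
  have conv: "convergent (\<lambda>t. measure_pmf.prob (\<mu> t) D)"
    if down: "\<And>y z. R y z \<Longrightarrow> z \<in> D \<Longrightarrow> y \<in> D" for D
  proof -
    have "decseq (\<lambda>t. measure_pmf.prob (\<mu> t) D)"
      by (intro decseq_SucI prob_le_of_rel_pmf_downward_closed[OF chain down])
    then obtain L where "(\<lambda>t. measure_pmf.prob (\<mu> t) D) \<longlonglongrightarrow> L"
      by (rule decseq_convergent[where B=0]) auto
    then show ?thesis by (auto simp: convergent_def)
  qed
  let ?below = "{y. R y x}"
  have "?below = (?below - {x}) \<union> {x}" using R(1) by (auto dest: reflpD)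
  then have "measure_pmf.prob (\<mu> t) ?below = measure_pmf.prob (\<mu> t) (?below - {x}) + pmf (\<mu> t) x" for t
    using measure_pmf.finite_measure_Union[of "?below - {x}" "\<mu> t" "{x}"]
    by (simp add: measure_pmf_single)
  moreover have "convergent (\<lambda>t. measure_pmf.prob (\<mu> t) ?below)"
    using R(2) by (intro conv) (auto elim: transpE)
  moreover have "convergent (\<lambda>t. measure_pmf.prob (\<mu> t) (?below - {x}))"
    using R(2,3) by (intro conv) (auto elim: transpE dest: antisympD)
  ultimately show ?thesis using convergent_diff by fastforce
qed

lemma stationary_of_pmf_limit:
  assumes lim: "\<And>x. (\<lambda>t. pmf (\<mu> t) x) \<longlonglongrightarrow> pmf \<pi> x"
    and step: "\<And>t. \<mu> (Suc t) = bind_pmf (\<mu> t) K"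
    and finite_pred: "\<And>y. finite {x. y \<in> set_pmf (K x)}"
  shows "bind_pmf \<pi> K = \<pi>"
proof (rule pmf_eqI)
  fix y
  have pmf_bind_finite: "pmf (bind_pmf p K) y = (\<Sum>x | y \<in> set_pmf (K x). pmf p x * pmf (K x) y)" for p
    unfolding pmf_bind
    by (subst integral_measure_pmf_real[OF finite_pred]) (auto simp: set_pmf_eq mult.commute)
  have "(\<lambda>t. pmf (\<mu> (Suc t)) y) \<longlonglongrightarrow> pmf \<pi> y"
    using lim by (rule LIMSEQ_Suc)
  moreover have "(\<lambda>t. pmf (\<mu> (Suc t)) y) \<longlonglongrightarrow> pmf (bind_pmf \<pi> K) y"
    unfolding step pmf_bind_finite by (intro tendsto_sum tendsto_mult_right lim)
  ultimately show "pmf (bind_pmf \<pi> K) y = pmf \<pi> y" by (rule LIMSEQ_unique[rotated])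
qed

lemma nn_integral_tight_pmf_limit_eq_1:
  fixes \<mu> :: "nat \<Rightarrow> 'a pmf"
  assumes lim: "\<And>x. (\<lambda>t. pmf (\<mu> t) x) \<longlonglongrightarrow> f x"
    and finite: "\<And>c. finite (B c)"
    and tight: "\<And>c t. 1 - e c \<le> measure_pmf.prob (\<mu> t) (B c)"
    and small: "e \<longlonglongrightarrow> 0"
  shows "(\<integral>\<^sup>+x. ennreal (f x) \<partial>count_space UNIV) = 1"
proof (rule antisym)
  have "ennreal (f x) = liminf (\<lambda>t. ennreal (pmf (\<mu> t) x))" for x
    using lim by (intro lim_imp_Liminf[symmetric] tendsto_ennrealI) auto
  then have "(\<integral>\<^sup>+x. ennreal (f x) \<partial>count_space UNIV)
      \<le> liminf (\<lambda>t. \<integral>\<^sup>+x. ennreal (pmf (\<mu> t) x) \<partial>count_space UNIV)"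
    using nn_integral_liminf[of "\<lambda>t x. ennreal (pmf (\<mu> t) x)" "count_space UNIV"] by simp
  also have "\<dots> = 1"
    by (simp add: nn_integral_pmf measure_pmf.emeasure_space_1 Liminf_const)
  finally show "(\<integral>\<^sup>+x. ennreal (f x) \<partial>count_space UNIV) \<le> 1" .
next
  have f_nonneg: "0 \<le> f x" for x
    by (rule LIMSEQ_le_const[OF lim]) auto
  have "ennreal (1 - e c) \<le> (\<integral>\<^sup>+x. ennreal (f x) \<partial>count_space UNIV)" for c
  proof -
    have "(\<lambda>t. measure_pmf.prob (\<mu> t) (B c)) \<longlonglongrightarrow> sum f (B c)"
      by (simp add: measure_measure_pmf_finite[OF finite] lim tendsto_sum)
    then have "1 - e c \<le> sum f (B c)"
      using tight by (intro LIMSEQ_le_const) auto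
    then have "ennreal (1 - e c) \<le> (\<Sum>x\<in>B c. ennreal (f x))"
      using f_nonneg by (simp add: ennreal_leI sum_nonneg)
    also have "\<dots> = (\<integral>\<^sup>+x. ennreal (f x) * indicator (B c) x \<partial>count_space UNIV)"
      by (simp add: nn_integral_indicator_finite[OF finite])
    also have "\<dots> \<le> (\<integral>\<^sup>+x. ennreal (f x) \<partial>count_space UNIV)"
      by (intro nn_integral_mono) (simp add: indicator_def)
    finally show ?thesis .
  qed
  moreover have "(\<lambda>c. ennreal (1 - e c)) \<longlonglongrightarrow> ennreal 1"
    using small by (intro tendsto_ennrealI tendsto_eq_intros) auto
  ultimately show "1 \<le> (\<integral>\<^sup>+x. ennreal (f x) \<partial>count_space UNIV)"
    using Lim_bounded[of "\<lambda>c. ennreal (1 - e c)" "ennreal 1" 0] by simp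
qed

lemma prob_mem_pmf_of_card_subsets:
  assumes "finite A" "i \<in> A" "m \<le> card A"
  shows "measure_pmf.prob (pmf_of_set {S. S \<subseteq> A \<and> card S = m}) {S. i \<in> S} = m / card A"
proof -
  let ?X = "{S. S \<subseteq> A \<and> card S = m}" and ?Y = "{T. T \<subseteq> A - {i} \<and> card T = m - 1}"
  have card_X: "card ?X = card A choose m" by (rule n_subsets[OF assms(1)])
  have "?X \<noteq> {}" using assms(3) obtain_subset_with_card_n[of m A] by auto
  then have prob_eq: "measure_pmf.prob (pmf_of_set ?X) {S. i \<in> S} = card (?X \<inter> {S. i \<in> S}) / card ?X"
    using assms(1) by (simp add: measure_pmf_of_set finite_Collect_subsets)
  show ?thesis
  proof (cases m)
    case 0
    then have "?X \<inter> {S. i \<in> S} = {}" using assms(1) by (auto dest: finite_subset)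
    then show ?thesis unfolding prob_eq using 0 by simp
  next
    case (Suc m')
    have with_i: "?X \<inter> {S. i \<in> S} = insert i ` ?Y"
    proof (intro set_eqI iffI)
      fix S assume S: "S \<in> ?X \<inter> {S. i \<in> S}"
      then have "S = insert i (S - {i})" "S - {i} \<in> ?Y"
        using assms(1) by (auto simp: card_Diff_singleton dest: finite_subset)
      then show "S \<in> insert i ` ?Y" by blast
    next
      fix S assume "S \<in> insert i ` ?Y"
      then obtain T where T: "T \<subseteq> A - {i}" "card T = m - 1" "S = insert i T" by auto
      then have "finite T" "i \<notin> T" using assms(1) by (auto dest: finite_subset)
      then show "S \<in> ?X \<inter> {S. i \<in> S}" using T assms Suc by auto
    qed
    have "inj_on (insert i) ?Y"
      by (rule inj_onI) (metis Diff_insert_absorb Diff_iff insertI1 mem_Collect_eq subsetD)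
    then have card_with_i: "card (?X \<inter> {S. i \<in> S}) = (card A - 1) choose (m - 1)"
      unfolding with_i using assms by (simp add: card_image n_subsets card_Diff_singleton)
    obtain N where N: "card A = Suc N" using assms by (cases "card A") auto
    have key: "real (card A choose m) * m = card A * ((card A - 1) choose (m - 1))"
      using Suc_times_binomial_eq[of N m'] unfolding N Suc by (metis diff_Suc_1 mult.commute of_nat_mult)
    have "0 < real (card A choose m)" using assms by simp
    then show ?thesis unfolding prob_eq card_X card_with_i using key N by (simp add: field_simps)
  qed
qed

lemma prob_mem_pmf_of_card_subsets_notin:
  assumes "finite A" "j \<notin> A" "m \<le> card A"
  shows "measure_pmf.prob (pmf_of_set {S. S \<subseteq> A \<and> card S = m}) {S. j \<in> S} = 0"
proof -
  let ?X = "{S. S \<subseteq> A \<and> card S = m}"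
  have "?X \<noteq> {}" using assms(3) obtain_subset_with_card_n[of m A] by auto
  moreover have "finite ?X" using assms(1) by (simp add: finite_Collect_subsets)
  ultimately show ?thesis using assms(2) by (auto simp: measure_pmf_zero_iff)
qed

lemma prob_atLeast_Suc: "measure_pmf.prob (\<nu> :: nat pmf) {Suc y..} = 1 - measure_pmf.prob \<nu> {..y}"
proof -
  have "{Suc y..} = UNIV - {..y}" by auto
  then show ?thesis using measure_pmf.prob_compl[of "{..y}" \<nu>] by simp
qed

lemma pmf_eq_diff_atLeast: "pmf (\<nu> :: nat pmf) y = measure_pmf.prob \<nu> {y..} - measure_pmf.prob \<nu> {Suc y..}"
proof -
  have "{y..} = {y} \<union> {Suc y..}" by auto
  then have "measure_pmf.prob \<nu> {y..} = pmf \<nu> y + measure_pmf.prob \<nu> {Suc y..}"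
    using measure_pmf.finite_measure_Union[of "{y}" \<nu> "{Suc y..}"]
    by (simp add: measure_pmf_single)
  then show ?thesis by simp
qed

locale lazy_reflected_walk =
  fixes K :: "nat \<Rightarrow> nat pmf" and up down :: real
  assumes set_pmf_step: "set_pmf (K x) \<subseteq> {x - 1, x, Suc x}"
      \<comment> \<open>at 0, x - 1 = 0: the walk is reflected\<close>
    and pmf_step_up: "pmf (K x) (Suc x) = up"
    and pmf_step_down: "pmf (K (Suc x)) x = down"
    and up_less_down: "up < down"
begin

definition ratio :: real where
  "ratio = up / down"

lemma up_nonneg: "0 \<le> up"
  using pmf_step_up[of 0] pmf_nonneg by metis

lemma down_pos: "0 < down"
  using up_nonneg up_less_down by linarith

lemma up_plus_down_le_1: "up + down \<le> 1"
proof -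
  have "measure_pmf.prob (K 1) {0, 2} = pmf (K 1) 0 + pmf (K 1) 2"
    by (simp add: measure_measure_pmf_finite)
  then show ?thesis
    using pmf_step_up[of 1] pmf_step_down[of 0] measure_pmf.prob_le_1[of "K 1" "{0, 2}"]
    by (simp add: numeral_2_eq_2)
qed

lemma ratio_nonneg: "0 \<le> ratio"
  using up_nonneg down_pos by (simp add: ratio_def)

lemma ratio_less_1: "ratio < 1"
  using up_less_down down_pos by (simp add: ratio_def)

lemma prob_step_atMost:
  "measure_pmf.prob (K x) {..y} =
     (if x < y then 1 else if x = y then 1 - up else if x = Suc y then down else 0)"
proof -
  consider "x < y" | "x = y" | "x = Suc y" | "Suc y < x" by linarith
  then show ?thesis
  proof cases
    case 1
    then have "measure_pmf.prob (K x) {..y} = measure_pmf.prob (K x) UNIV"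
      by (intro measure_pmf_eq_on_superset_of_support[OF set_pmf_step]) auto
    then show ?thesis using 1 by simp
  next
    case 2
    then have "measure_pmf.prob (K x) (UNIV - {..y}) = measure_pmf.prob (K x) {Suc x}"
      by (intro measure_pmf_eq_on_superset_of_support[OF set_pmf_step]) auto
    then show ?thesis
      using 2 measure_pmf.prob_compl[of "{..y}" "K x"] pmf_step_up[of x]
      by (simp add: measure_pmf_single)
  next
    case 3
    then have "measure_pmf.prob (K x) {..y} = measure_pmf.prob (K x) {y}"
      by (intro measure_pmf_eq_on_superset_of_support[OF set_pmf_step]) auto
    then show ?thesis using 3 pmf_step_down[of y] by (simp add: measure_pmf_single)
  next
    case 4
    then have "measure_pmf.prob (K x) {..y} = measure_pmf.prob (K x) {}"
      by (intro measure_pmf_eq_on_superset_of_support[OF set_pmf_step]) auto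
    then show ?thesis using 4 by simp
  qed
qed

lemma prob_bind_step_atMost:
  "measure_pmf.prob (bind_pmf \<nu> K) {..y} =
     measure_pmf.prob \<nu> {..y} - up * pmf \<nu> y + down * pmf \<nu> (Suc y)"
proof -
  let ?f = "\<lambda>x. (if x < y then 1 else if x = y then 1 - up else if x = Suc y then down else 0) :: real"
  have "measure_pmf.prob (bind_pmf \<nu> K) {..y} = (\<integral>x. ?f x \<partial>\<nu>)"
    unfolding measure_bind_pmf prob_step_atMost ..
  also have "\<dots> = (\<Sum>x\<in>insert (Suc y) (insert y {..<y}). ?f x * pmf \<nu> x)"
    by (rule integral_measure_pmf_real) (auto split: if_splits)
  also have "\<dots> = down * pmf \<nu> (Suc y) + (1 - up) * pmf \<nu> y + (\<Sum>x<y. pmf \<nu> x)"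
    by simp
  also have "(\<Sum>x<y. pmf \<nu> x) = measure_pmf.prob \<nu> {..y} - pmf \<nu> y"
    by (simp add: measure_measure_pmf_finite lessThan_Suc_atMost[symmetric])
  finally show ?thesis by (simp add: algebra_simps)
qed

lemma prob_bind_step_atLeast_Suc:
  "measure_pmf.prob (bind_pmf \<nu> K) {Suc m..} =
     (1 - up - down) * measure_pmf.prob \<nu> {Suc m..} + up * measure_pmf.prob \<nu> {m..}
     + down * measure_pmf.prob \<nu> {Suc (Suc m)..}"
  using prob_bind_step_atMost[of \<nu> m]
  unfolding prob_atLeast_Suc pmf_eq_diff_atLeast[of \<nu> m] pmf_eq_diff_atLeast[of \<nu> "Suc m"]
  by (simp add: prob_atLeast_Suc algebra_simps)

lemma prob_bind_step_atLeast_le_power: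
  assumes "\<And>m. measure_pmf.prob \<nu> {m..} \<le> ratio ^ m"
  shows "measure_pmf.prob (bind_pmf \<nu> K) {m..} \<le> ratio ^ m"
proof (cases m)
  case (Suc m')
  have "measure_pmf.prob (bind_pmf \<nu> K) {Suc m'..}
      \<le> (1 - up - down) * ratio ^ Suc m' + up * ratio ^ m' + down * ratio ^ Suc (Suc m')"
    unfolding prob_bind_step_atLeast_Suc
    using up_plus_down_le_1 up_nonneg down_pos by (intro add_mono mult_left_mono assms) auto
  also have "\<dots> = ratio ^ Suc m'"
    using down_pos by (simp add: ratio_def field_simps)
  finally show ?thesis using Suc by simp
qed simp

lemma stationary_pmf_Suc:
  assumes "bind_pmf \<nu> K = \<nu>"
  shows "pmf \<nu> (Suc y) = ratio * pmf \<nu> y"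
proof -
  have "up * pmf \<nu> y = down * pmf \<nu> (Suc y)"
    using prob_bind_step_atMost[of \<nu> y] assms by simp
  then show ?thesis using down_pos by (simp add: ratio_def field_simps)
qed

lemma stationary_prob_atLeast:
  assumes "bind_pmf \<nu> K = \<nu>"
  shows "measure_pmf.prob \<nu> {m..} = ratio ^ m"
proof -
  have pmf_power: "pmf \<nu> y = ratio ^ y * pmf \<nu> 0" for y
    by (induction y) (simp_all add: stationary_pmf_Suc[OF assms])
  have prob_lessThan: "measure_pmf.prob \<nu> {..<m} = pmf \<nu> 0 * (1 - ratio ^ m) / (1 - ratio)" for m
  proof -
    have "measure_pmf.prob \<nu> {..<m} = (\<Sum>y<m. ratio ^ y * pmf \<nu> 0)"
      unfolding measure_measure_pmf_finite[OF finite_lessThan] by (rule sum.cong[OF refl pmf_power])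
    then have "measure_pmf.prob \<nu> {..<m} = (\<Sum>y<m. ratio ^ y) * pmf \<nu> 0"
      by (simp add: sum_distrib_right)
    then show ?thesis using ratio_less_1 by (simp add: sum_gp_strict)
  qed
  have "(\<lambda>m. measure_pmf.prob \<nu> {..<m}) \<longlonglongrightarrow> measure_pmf.prob \<nu> (\<Union>m. {..<m})"
    by (rule measure_pmf.finite_Lim_measure_incseq) (auto simp: incseq_def)
  moreover have "(\<Union>m. {..<m::nat}) = UNIV" by auto
  moreover have "(\<lambda>m. measure_pmf.prob \<nu> {..<m}) \<longlonglongrightarrow> pmf \<nu> 0 / (1 - ratio)"
    unfolding prob_lessThan using ratio_nonneg ratio_less_1
    by (auto intro!: tendsto_eq_intros LIMSEQ_power_zero)
  ultimately have "pmf \<nu> 0 / (1 - ratio) = 1"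
    using LIMSEQ_unique by fastforce
  then have pmf_0: "pmf \<nu> 0 = 1 - ratio" using ratio_less_1 by (simp add: field_simps)
  have "{m..} = UNIV - {..<m}" by auto
  then have "measure_pmf.prob \<nu> {m..} = 1 - measure_pmf.prob \<nu> {..<m}"
    using measure_pmf.prob_compl[of "{..<m}" \<nu>] by simp
  then show ?thesis unfolding prob_lessThan pmf_0 using ratio_less_1 by simp
qed

end

definition mix_event :: "nat \<Rightarrow> nat \<Rightarrow> real \<Rightarrow> (nat \<times> nat set) pmf" where
  "mix_event n k pa = bind_pmf (pmf_of_set {..<n}) (\<lambda>j. map_pmf (Pair j) (selection n k pa j))"

definition mix_update :: "nat \<times> nat set \<Rightarrow> nat list \<Rightarrow> nat list" where
  "mix_update e s = release (snd e) (arrive (fst e) s)"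

definition queue_update :: "nat \<Rightarrow> nat \<times> nat set \<Rightarrow> nat \<Rightarrow> nat" where
  "queue_update i e x =
     (if fst e = i \<and> i \<notin> snd e then Suc x else if fst e \<noteq> i \<and> i \<in> snd e then x - 1 else x)"

lemma mix_step_eq_map_mix_event: "mix_step n k pa s = map_pmf (\<lambda>e. mix_update e s) (mix_event n k pa)"
  unfolding mix_step_def mix_event_def mix_update_def by (simp add: map_bind_pmf pmf.map_comp o_def)

lemma length_mix_update [simp]: "length (mix_update e s) = length s"
  by (simp add: mix_update_def release_def arrive_def)

lemma nth_mix_update: "i < length s \<Longrightarrow> mix_update e s ! i = queue_update i e (s ! i)"
  by (simp add: mix_update_def release_def arrive_def queue_update_def nth_list_update)

lemma queue_update_mono: "x \<le> y \<Longrightarrow> queue_update i e x \<le> queue_update i e y"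
  by (auto simp: queue_update_def)

lemma le_Suc_queue_update: "x \<le> Suc (queue_update i e x)"
  by (auto simp: queue_update_def)

fun releases_left :: "(nat \<times> nat) option \<Rightarrow> nat" where
  "releases_left None = 0"
| "releases_left (Some (q, m)) = Suc m"

lemma releases_left_tag_update_arrival:
  "releases_left (tag_update S (Some (j, m))) = (if j \<in> S then m else Suc m)"
  by (cases m) (auto simp: tag_update_def)

lemma releases_left_pos_iff: "0 < releases_left p \<longleftrightarrow> p \<noteq> None"
  by (induction p rule: releases_left.induct) auto

lemma tag_update_SomeD: "tag_update S p = Some (q, m) \<Longrightarrow> \<exists>m'. p = Some (q, m')"
  by (auto simp: tag_update_def split: option.splits if_splits)

lemma tagged_step_eq_map_mix_event:
  "tagged_step n k pa x = map_pmf (\<lambda>e. (mix_update e (fst x), tag_update (snd e) (snd x))) (mix_event n k pa)"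
  unfolding tagged_step_def mix_event_def mix_update_def by (simp add: map_bind_pmf pmf.map_comp o_def)

lemma tagged_init_eq_bind_mix_event:
  "tagged_init n k pa \<pi> = bind_pmf (mix_event n k pa)
     (\<lambda>e. map_pmf (\<lambda>s. (mix_update e s, tag_update (snd e) (Some (fst e, s ! fst e)))) \<pi>)"
proof -
  have "tagged_init n k pa \<pi> = bind_pmf \<pi> (\<lambda>s. map_pmf
      (\<lambda>e. (mix_update e s, tag_update (snd e) (Some (fst e, s ! fst e)))) (mix_event n k pa))"
    unfolding tagged_init_def mix_event_def mix_update_def by (simp add: map_bind_pmf pmf.map_comp o_def)
  then show ?thesis unfolding map_pmf_def by (simp add: bind_commute_pmf[of \<pi>])
qed

lemma tagged_dist_Suc:
  "tagged_dist n k pa \<pi> (Suc t) = bind_pmf (tagged_dist n k pa \<pi> t) (tagged_step n k pa)"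
  by (simp add: tagged_dist_def)

lemma rel_pmf_mix_step:
  assumes "list_all2 (\<le>) x y"
  shows "rel_pmf (list_all2 (\<le>)) (mix_step n k pa x) (mix_step n k pa y)"
  unfolding mix_step_eq_map_mix_event pmf.rel_map
  using assms by (intro rel_pmf_reflI) (auto simp: list_all2_conv_all_nth nth_mix_update queue_update_mono)

lemma finite_mix_step_predecessors: "finite {x. y \<in> set_pmf (mix_step n k pa x)}"
proof (rule finite_subset)
  show "{x. y \<in> set_pmf (mix_step n k pa x)}
      \<subseteq> {x. set x \<subseteq> {..Suc (sum_list y)} \<and> length x = length y}"
  proof
    fix x assume "x \<in> {x. y \<in> set_pmf (mix_step n k pa x)}"
    then obtain e where y: "y = mix_update e x" by (auto simp: mix_step_eq_map_mix_event)
    have "v \<le> Suc (sum_list y)" if "v \<in> set x" for v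
    proof -
      obtain i where i: "i < length x" "v = x ! i" using \<open>v \<in> set x\<close> by (auto simp: in_set_conv_nth)
      then have "v \<le> Suc (y ! i)" using y by (simp add: nth_mix_update le_Suc_queue_update)
      also have "y ! i \<le> sum_list y" using i y by (simp add: elem_le_sum_list)
      finally show ?thesis by simp
    qed
    then show "x \<in> {x. set x \<subseteq> {..Suc (sum_list y)} \<and> length x = length y}" using y by auto
  qed
  show "finite {x. set x \<subseteq> {..Suc (sum_list y)} \<and> length x = length y}"
    by (rule finite_lists_length_eq) simp
qed

locale sampling_mix =
  fixes n k :: nat and pa :: real
  assumes two_le_k: "2 \<le> k" and k_less_n: "k < n" and pa_nonneg: "0 \<le> pa" and pa_le_1: "pa \<le> 1"
begin

definition load :: real where
  "load = (1 - pa) / (real k - pa)"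

lemma n_pos: "0 < n"
  using k_less_n by simp

lemma k_minus_pa_pos: "0 < real k - pa"
  using two_le_k pa_le_1 by simp

lemma load_nonneg: "0 \<le> load"
  using pa_le_1 k_minus_pa_pos by (simp add: load_def)

lemma load_less_1: "load < 1"
  using k_minus_pa_pos two_le_k by (simp add: load_def)

lemma prob_mix_event:
  "measure_pmf.prob (mix_event n k pa) E =
     (\<Sum>j<n. measure_pmf.prob (selection n k pa j) {S. (j, S) \<in> E}) / n"
  unfolding mix_event_def measure_bind_pmf
  using n_pos by (subst integral_pmf_of_set) (auto simp: vimage_def)

lemma fst_mix_event: "e \<in> set_pmf (mix_event n k pa) \<Longrightarrow> fst e < n"
  using n_pos by (auto simp: mix_event_def lessThan_empty_iff)

lemma prob_selection:
  "measure_pmf.prob (selection n k pa j) B =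
     pa * measure_pmf.prob (pmf_of_set {S. S \<subseteq> {..<n} - {j} \<and> card S = k - 1}) {S. insert j S \<in> B}
     + (1 - pa) * measure_pmf.prob (pmf_of_set {S. S \<subseteq> {..<n} - {j} \<and> card S = k}) B"
  unfolding selection_def measure_bind_pmf
  using pa_nonneg pa_le_1 by (simp add: vimage_def)

lemma prob_selection_arrival:
  assumes "j < n"
  shows "measure_pmf.prob (selection n k pa j) {S. j \<in> S} = pa"
  unfolding prob_selection using assms k_less_n by (simp add: prob_mem_pmf_of_card_subsets_notin)

lemma prob_selection_other:
  assumes "j < n" "i < n" "i \<noteq> j"
  shows "measure_pmf.prob (selection n k pa j) {S. i \<in> S} = (real k - pa) / real (n - 1)"
proof -
  have others: "finite ({..<n} - {j})" "i \<in> {..<n} - {j}" "card ({..<n} - {j}) = n - 1"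
    using assms by auto
  have "{S. i \<in> insert j S} = {S. i \<in> S}" using assms by auto
  then have "measure_pmf.prob (selection n k pa j) {S. i \<in> S}
      = pa * (real (k - 1) / real (n - 1)) + (1 - pa) * (real k / real (n - 1))"
    unfolding prob_selection using k_less_n
    by (simp add: prob_mem_pmf_of_card_subsets[OF others(1,2)] others(3))
  also have "\<dots> = (pa * (real k - 1) + (1 - pa) * real k) / real (n - 1)"
    using two_le_k by (simp add: of_nat_diff add_divide_distrib)
  also have "\<dots> = (real k - pa) / real (n - 1)"
    by (simp add: algebra_simps)
  finally show ?thesis .
qed

lemma prob_released:
  assumes "i < n"
  shows "measure_pmf.prob (mix_event n k pa) {e. i \<in> snd e} = k / n"
proof -
  have "(\<Sum>j<n. measure_pmf.prob (selection n k pa j) {S. (j, S) \<in> {e. i \<in> snd e}})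
      = (\<Sum>j<n. if j = i then pa else (real k - pa) / real (n - 1))"
    by (rule sum.cong) (auto simp: prob_selection_arrival prob_selection_other assms)
  also have "\<dots> = pa + real (n - 1) * ((real k - pa) / real (n - 1))"
  proof -
    have "{..<n} \<inter> - {i} = {..<n} - {i}" by auto
    then show ?thesis using assms by (simp add: sum.If_cases Int_absorb1)
  qed
  also have "\<dots> = k"
    using two_le_k k_less_n by simp
  finally show ?thesis unfolding prob_mix_event by simp
qed

lemma prob_arrival_unreleased:
  assumes "i < n"
  shows "measure_pmf.prob (mix_event n k pa) {e. fst e = i \<and> i \<notin> snd e} = (1 - pa) / n"
proof -
  have "measure_pmf.prob (selection n k pa i) {S. i \<notin> S} = 1 - pa"
    using measure_pmf.prob_compl[of "{S. i \<in> S}" "selection n k pa i"] prob_selection_arrival[OF assms]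
    by (simp add: Compl_eq_Diff_UNIV[symmetric] Collect_neg_eq)
  then have "(\<Sum>j<n. measure_pmf.prob (selection n k pa j) {S. (j, S) \<in> {e. fst e = i \<and> i \<notin> snd e}})
      = (\<Sum>j<n. if j = i then 1 - pa else 0)"
    by (intro sum.cong) auto
  then show ?thesis unfolding prob_mix_event using assms by simp
qed

lemma prob_released_other_arrival:
  assumes "i < n"
  shows "measure_pmf.prob (mix_event n k pa) {e. fst e \<noteq> i \<and> i \<in> snd e} = (real k - pa) / n"
proof -
  have "(\<Sum>j<n. measure_pmf.prob (selection n k pa j) {S. (j, S) \<in> {e. fst e \<noteq> i \<and> i \<in> snd e}})
      = (\<Sum>j<n. if j = i then 0 else (real k - pa) / real (n - 1))"
    by (rule sum.cong) (auto simp: prob_selection_other assms)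
  also have "\<dots> = real (n - 1) * ((real k - pa) / real (n - 1))"
  proof -
    have "{..<n} \<inter> - {i} = {..<n} - {i}" by auto
    then show ?thesis using assms by (simp add: sum.If_cases)
  qed
  also have "\<dots> = real k - pa"
    using two_le_k k_less_n by simp
  finally show ?thesis unfolding prob_mix_event by simp
qed

lemma prob_arrival_released: "measure_pmf.prob (mix_event n k pa) {e. fst e \<in> snd e} = pa"
proof -
  have "(\<Sum>j<n. measure_pmf.prob (selection n k pa j) {S. (j, S) \<in> {e. fst e \<in> snd e}}) = n * pa"
    by (simp add: prob_selection_arrival)
  then show ?thesis unfolding prob_mix_event using n_pos by simp
qed

definition queue_step :: "nat \<Rightarrow> nat \<Rightarrow> nat pmf" where
  "queue_step i x = map_pmf (\<lambda>e. queue_update i e x) (mix_event n k pa)"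

lemma lazy_reflected_walk_queue_step:
  assumes "i < n"
  shows "lazy_reflected_walk (queue_step i) ((1 - pa) / n) ((real k - pa) / n)"
proof
  show "set_pmf (queue_step i x) \<subseteq> {x - 1, x, Suc x}" for x
    by (auto simp: queue_step_def queue_update_def)
  have "queue_update i e x = Suc x \<longleftrightarrow> fst e = i \<and> i \<notin> snd e" for e x
    by (auto simp: queue_update_def)
  then show "pmf (queue_step i x) (Suc x) = (1 - pa) / n" for x
    unfolding queue_step_def pmf_map vimage_def using prob_arrival_unreleased[OF assms] by simp
  have "queue_update i e (Suc x) = x \<longleftrightarrow> fst e \<noteq> i \<and> i \<in> snd e" for e x
    by (simp add: queue_update_def)
  then show "pmf (queue_step i (Suc x)) x = (real k - pa) / n" for x
    unfolding queue_step_def pmf_map vimage_def using prob_released_other_arrival[OF assms] by simp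
  show "(1 - pa) / n < (real k - pa) / n"
    using two_le_k n_pos by (simp add: divide_strict_right_mono)
qed

lemma ratio_queue_step:
  assumes "i < n"
  shows "lazy_reflected_walk.ratio ((1 - pa) / n) ((real k - pa) / n) = load"
  using n_pos lazy_reflected_walk.ratio_def[OF lazy_reflected_walk_queue_step[OF assms]]
  by (simp add: load_def)

lemma map_nth_bind_mix_step:
  assumes "\<forall>s\<in>set_pmf \<pi>. length s = n" "i < n"
  shows "map_pmf (\<lambda>s. s ! i) (bind_pmf \<pi> (mix_step n k pa))
    = bind_pmf (map_pmf (\<lambda>s. s ! i) \<pi>) (queue_step i)"
proof -
  have "map_pmf (\<lambda>s. s ! i) (mix_step n k pa s) = queue_step i (s ! i)" if "s \<in> set_pmf \<pi>" for s
    using that assms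
    by (simp add: mix_step_eq_map_mix_event queue_step_def pmf.map_comp o_def nth_mix_update)
  then show ?thesis
    by (simp add: map_bind_pmf bind_map_pmf o_def cong: bind_pmf_cong)
qed

lemma steady_state_prob_queue_ge:
  assumes "steady_state n k pa \<pi>" "i < n"
  shows "measure_pmf.prob \<pi> {s. m \<le> s ! i} = load ^ m"
proof -
  interpret queue: lazy_reflected_walk "queue_step i" "(1 - pa) / n" "(real k - pa) / n"
    using assms(2) by (rule lazy_reflected_walk_queue_step)
  have "bind_pmf (map_pmf (\<lambda>s. s ! i) \<pi>) (queue_step i) = map_pmf (\<lambda>s. s ! i) \<pi>"
    using assms map_nth_bind_mix_step[of \<pi> i] by (simp add: steady_state_def)
  then show ?thesis
    using queue.stationary_prob_atLeast[of "map_pmf (\<lambda>s. s ! i) \<pi>" m]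
    by (simp add: ratio_queue_step[OF assms(2)] vimage_def)
qed

lemma queue_load_steady_state:
  assumes "steady_state n k pa \<pi>" "i < n"
  shows "queue_load \<pi> i = load"
  using steady_state_prob_queue_ge[OF assms, of 1] by (simp add: queue_load_def Suc_le_eq)

lemma tagged_dist_queue_less:
  "x \<in> set_pmf (tagged_dist n k pa \<pi> t) \<Longrightarrow> snd x = Some (q, m) \<Longrightarrow> q < n"
proof (induction t arbitrary: x m)
  case 0
  then show ?case
    by (auto simp: tagged_dist_def tagged_init_eq_bind_mix_event dest!: fst_mix_event tag_update_SomeD)
next
  case (Suc t)
  from Suc.prems(1) obtain y e where y: "y \<in> set_pmf (tagged_dist n k pa \<pi> t)"
    and "x = (mix_update e (fst y), tag_update (snd e) (snd y))"
    unfolding tagged_dist_Suc tagged_step_eq_map_mix_event by auto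
  then obtain m' where "snd y = Some (q, m')"
    using Suc.prems(2) by (auto dest: tag_update_SomeD)
  then show ?case using Suc.IH y by blast
qed

lemma prob_tagged_step_releases_left:
  assumes "\<And>q m'. snd x = Some (q, m') \<Longrightarrow> q < n"
  shows "measure_pmf.prob (tagged_step n k pa x) {z. m < releases_left (snd z)} =
     (1 - real k / real n) * indicator {z. m < releases_left (snd z)} x
     + real k / real n * indicator {z. Suc m < releases_left (snd z)} x"
proof (cases "snd x")
  case None
  then show ?thesis by (simp add: tagged_step_eq_map_mix_event tag_update_def vimage_def)
next
  case (Some qm)
  then obtain q m' where qm: "snd x = Some (q, m')" by (cases qm) auto
  have q: "q < n" using assms qm by blast
  have prob_eq: "measure_pmf.prob (tagged_step n k pa x) {z. m < releases_left (snd z)} =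
     measure_pmf.prob (mix_event n k pa) {e. m < (if q \<in> snd e then m' else Suc m')}"
    unfolding tagged_step_eq_map_mix_event using qm by (simp add: vimage_def tag_update_def)
  consider "m < m'" | "m = m'" | "m' < m" by linarith
  then show ?thesis
  proof cases
    case 1
    then show ?thesis unfolding prob_eq using qm by simp
  next
    case 2
    have "{e. m < (if q \<in> snd e then m' else Suc m')} = UNIV - {e. q \<in> snd e}" using 2 by auto
    then show ?thesis unfolding prob_eq
      using 2 qm prob_released[OF q] measure_pmf.prob_compl[of "{e. q \<in> snd e}" "mix_event n k pa"]
      by (simp add: indicator_def Compl_eq_Diff_UNIV[symmetric] Collect_neg_eq)
  next
    case 3
    then show ?thesis unfolding prob_eq using qm by simp
  qed
qed

definition tagged_tail :: "nat list pmf \<Rightarrow> nat \<Rightarrow> nat \<Rightarrow> real" where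
  "tagged_tail \<pi> t m = measure_pmf.prob (tagged_dist n k pa \<pi> t) {z. m < releases_left (snd z)}"

lemma tagged_tail_Suc:
  "tagged_tail \<pi> (Suc t) m =
     (1 - real k / real n) * tagged_tail \<pi> t m + real k / real n * tagged_tail \<pi> t (Suc m)"
proof -
  have "tagged_tail \<pi> (Suc t) m =
      (\<integral>x. measure_pmf.prob (tagged_step n k pa x) {z. m < releases_left (snd z)}
        \<partial>tagged_dist n k pa \<pi> t)"
    unfolding tagged_tail_def tagged_dist_Suc measure_bind_pmf ..
  also have "\<dots> = (\<integral>x. (1 - real k / real n) * indicator {z. m < releases_left (snd z)} x
      + real k / real n * indicator {z. Suc m < releases_left (snd z)} x \<partial>tagged_dist n k pa \<pi> t)"
    by (intro integral_cong_AE)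
       (auto simp: AE_measure_pmf_iff prob_tagged_step_releases_left tagged_dist_queue_less)
  finally show ?thesis unfolding integral_indicator_comb_pmf tagged_tail_def .
qed

lemma tagged_tail_0:
  assumes "steady_state n k pa \<pi>"
  shows "tagged_tail \<pi> 0 m = (1 - pa + pa * load) * load ^ m"
proof -
  let ?R = "{e. fst e \<in> snd e}"
  have "tagged_tail \<pi> 0 m = (\<integral>e. measure_pmf.prob \<pi>
      {s. m < (if fst e \<in> snd e then s ! fst e else Suc (s ! fst e))} \<partial>mix_event n k pa)"
    unfolding tagged_tail_def tagged_dist_def funpow_0 tagged_init_eq_bind_mix_event measure_bind_pmf
    by (simp add: vimage_def releases_left_tag_update_arrival)
  also have "\<dots> = (\<integral>e. load ^ m * indicator (UNIV - ?R) e + load ^ Suc m * indicator ?R e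
      \<partial>mix_event n k pa)"
  proof (intro integral_cong_AE AE_pmfI)
    fix e assume "e \<in> set_pmf (mix_event n k pa)"
    then have j: "fst e < n" by (rule fst_mix_event)
    show "measure_pmf.prob \<pi> {s. m < (if fst e \<in> snd e then s ! fst e else Suc (s ! fst e))}
        = load ^ m * indicator (UNIV - ?R) e + load ^ Suc m * indicator ?R e"
    proof (cases "fst e \<in> snd e")
      case True
      then have "{s. m < (if fst e \<in> snd e then s ! fst e else Suc (s ! fst e))} = {s. Suc m \<le> s ! fst e}"
        by auto
      then show ?thesis using True steady_state_prob_queue_ge[OF assms j] by simp
    next
      case False
      then have "{s. m < (if fst e \<in> snd e then s ! fst e else Suc (s ! fst e))} = {s. m \<le> s ! fst e}"
        by auto
      then show ?thesis using False steady_state_prob_queue_ge[OF assms j] by simp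
    qed
  qed auto
  also have "\<dots> = load ^ m * (1 - pa) + load ^ Suc m * pa"
    unfolding integral_indicator_comb_pmf
    using prob_arrival_released measure_pmf.prob_compl[of ?R "mix_event n k pa"] by simp
  finally show ?thesis by (simp add: algebra_simps)
qed

lemma tagged_tail_steady_state:
  assumes "steady_state n k pa \<pi>"
  shows "tagged_tail \<pi> t m = (1 - pa + pa * load) * load ^ m * (1 - real k / real n * (1 - load)) ^ t"
proof (induction t arbitrary: m)
  case 0
  show ?case using tagged_tail_0[OF assms] by simp
next
  case (Suc t)
  define p where "p = real k / real n"
  show ?case unfolding tagged_tail_Suc Suc.IH p_def[symmetric] by (simp add: algebra_simps)
qed

lemma in_mix_prob_steady_state:
  assumes "steady_state n k pa \<pi>"
  shows "in_mix_prob n k pa \<pi> t =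
    real k * (1 - pa) / (real k - pa) * (1 - real k * (real k - 1) / (real n * (real k - pa))) ^ t"
proof -
  have "{x. snd x \<noteq> None} = {z :: nat list \<times> (nat \<times> nat) option. 0 < releases_left (snd z)}"
    by (simp add: releases_left_pos_iff)
  then have "in_mix_prob n k pa \<pi> t = tagged_tail \<pi> t 0"
    by (simp add: in_mix_prob_def tagged_tail_def)
  also have "\<dots> = (1 - pa + pa * load) * (1 - real k / real n * (1 - load)) ^ t"
    by (simp add: tagged_tail_steady_state[OF assms])
  also have "1 - pa + pa * load = real k * (1 - pa) / (real k - pa)"
    using k_minus_pa_pos by (simp add: load_def field_simps)
  also have "1 - real k / real n * (1 - load) = 1 - real k * (real k - 1) / (real n * (real k - pa))"
    using k_minus_pa_pos by (simp add: load_def field_simps)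
  finally show ?thesis .
qed

lemma mean_delay_steady_state:
  assumes "steady_state n k pa \<pi>" "0 < lam"
  shows "summable (in_mix_prob n k pa \<pi>)"
    and "mean_delay n k lam pa \<pi> = (1 - pa) / (lam * (real k - 1))"
proof -
  define q where "q = 1 - real k * (real k - 1) / (real n * (real k - pa))"
  have "real k * (real k - 1) \<le> real n * (real k - pa)"
  proof -
    have "real k * (real k - 1) \<le> (real k + 1) * (real k - 1)" using two_le_k by simp
    also have "\<dots> \<le> real n * (real k - pa)"
      using k_less_n pa_le_1 two_le_k by (intro mult_mono) auto
    finally show ?thesis .
  qed
  moreover have "0 < real k * (real k - 1)" using two_le_k by simp
  ultimately have q: "0 \<le> q" "q < 1"
    using k_minus_pa_pos n_pos by (auto simp: q_def field_simps)
  have in_mix: "in_mix_prob n k pa \<pi> = (\<lambda>t. real k * (1 - pa) / (real k - pa) * q ^ t)"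
    using in_mix_prob_steady_state[OF assms(1)] by (simp add: q_def fun_eq_iff)
  have "in_mix_prob n k pa \<pi> sums (real k * (1 - pa) / (real k - pa) * (1 / (1 - q)))"
    unfolding in_mix using q by (intro sums_mult geometric_sums) simp
  then have summable: "summable (in_mix_prob n k pa \<pi>)"
    and suminf: "(\<Sum>t. in_mix_prob n k pa \<pi> t) = real k * (1 - pa) / (real k - pa) / (1 - q)"
    by (simp_all add: sums_iff)
  show "summable (in_mix_prob n k pa \<pi>)" by (fact summable)
  have expected_steps: "real k * (1 - pa) / (real k - pa) / (1 - q) = real n * (1 - pa) / (real k - 1)"
  proof -
    have "1 - q = real k * (real k - 1) / (real n * (real k - pa))" by (simp add: q_def)
    moreover have "real k \<noteq> 0" "real k - 1 \<noteq> 0" "real n \<noteq> 0" "real k - pa \<noteq> 0"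
      using k_minus_pa_pos two_le_k n_pos by auto
    ultimately show ?thesis by (simp only:) (simp add: divide_simps)
  qed
  show "mean_delay n k lam pa \<pi> = (1 - pa) / (lam * (real k - 1))"
    unfolding mean_delay_def suminf expected_steps using assms(2) n_pos two_le_k by (simp add: divide_simps)
qed

definition mix_from_empty :: "nat \<Rightarrow> nat list pmf" where
  "mix_from_empty t = ((\<lambda>d. bind_pmf d (mix_step n k pa)) ^^ t) (return_pmf (replicate n 0))"

lemma mix_from_empty_0: "mix_from_empty 0 = return_pmf (replicate n 0)"
  by (simp add: mix_from_empty_def)

lemma mix_from_empty_Suc: "mix_from_empty (Suc t) = bind_pmf (mix_from_empty t) (mix_step n k pa)"
  by (simp add: mix_from_empty_def)

lemma length_mix_from_empty: "s \<in> set_pmf (mix_from_empty t) \<Longrightarrow> length s = n"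
  by (induction t arbitrary: s)
     (auto simp: mix_from_empty_def mix_step_eq_map_mix_event)

lemma rel_pmf_mix_from_empty_Suc:
  "rel_pmf (list_all2 (\<le>)) (mix_from_empty t) (mix_from_empty (Suc t))"
proof (induction t)
  case 0
  have "list_all2 (\<le>) (replicate n 0) y" if "y \<in> set_pmf (mix_from_empty (Suc 0))" for y
    using length_mix_from_empty[OF that] by (simp add: list_all2_conv_all_nth)
  then show ?case by (simp add: mix_from_empty_0 rel_pmf_return_pmf1)
next
  case (Suc t)
  then show ?case
    unfolding mix_from_empty_Suc[of "Suc t"] mix_from_empty_Suc[of t]
    by (intro rel_pmf_bindI[OF _ rel_pmf_mix_step]) (simp add: mix_from_empty_Suc)
qed

lemma pmf_mix_from_empty_tendsto:
  "(\<lambda>t. pmf (mix_from_empty t) x) \<longlonglongrightarrow> lim (\<lambda>t. pmf (mix_from_empty t) x)"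
proof -
  have "reflp (list_all2 ((\<le>) :: nat \<Rightarrow> _))"
    by (intro list.rel_reflp reflp_on_le)
  moreover have "transp (list_all2 ((\<le>) :: nat \<Rightarrow> _))"
    by (intro list.rel_transp transp_on_le)
  moreover have "antisymp (list_all2 ((\<le>) :: nat \<Rightarrow> _))"
    unfolding antisymp_def by (metis list_all2_antisym order_antisym)
  ultimately show ?thesis
    using convergent_pmf_of_rel_pmf_chain[where \<mu>=mix_from_empty, OF rel_pmf_mix_from_empty_Suc]
    by (simp add: convergent_LIMSEQ_iff)
qed

lemma prob_mix_from_empty_queue_ge:
  assumes "i < n"
  shows "measure_pmf.prob (mix_from_empty t) {s. m \<le> s ! i} \<le> load ^ m"
proof -
  interpret queue: lazy_reflected_walk "queue_step i" "(1 - pa) / n" "(real k - pa) / n"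
    using assms by (rule lazy_reflected_walk_queue_step)
  have "measure_pmf.prob (map_pmf (\<lambda>s. s ! i) (mix_from_empty t)) {m..} \<le> load ^ m" for m
  proof (induction t arbitrary: m)
    case 0
    show ?case using load_nonneg assms by (cases m) (simp_all add: mix_from_empty_0)
  next
    case (Suc t)
    have "map_pmf (\<lambda>s. s ! i) (mix_from_empty (Suc t))
        = bind_pmf (map_pmf (\<lambda>s. s ! i) (mix_from_empty t)) (queue_step i)"
      unfolding mix_from_empty_Suc using assms length_mix_from_empty
      by (intro map_nth_bind_mix_step) auto
    then show ?case
      using queue.prob_bind_step_atLeast_le_power[unfolded ratio_queue_step[OF assms], OF Suc.IH]
      by simp
  qed
  then show ?thesis by (simp add: vimage_def)
qed

definition bounded_states :: "nat \<Rightarrow> nat list set" where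
  "bounded_states c = {s. set s \<subseteq> {..c} \<and> length s = n}"

lemma finite_bounded_states: "finite (bounded_states c)"
  unfolding bounded_states_def by (rule finite_lists_length_eq) simp

lemma prob_mix_from_empty_bounded_states:
  "1 - n * load ^ Suc c \<le> measure_pmf.prob (mix_from_empty t) (bounded_states c)"
proof -
  have "s \<in> (\<Union>i<n. {s. Suc c \<le> s ! i})" if "s \<notin> bounded_states c" "length s = n" for s
  proof -
    have "\<not> set s \<subseteq> {..c}" using that by (simp add: bounded_states_def)
    then obtain v where "v \<in> set s" "c < v" by (metis atMost_iff not_le subsetI)
    then show ?thesis using that(2) by (force simp: in_set_conv_nth Suc_le_eq)
  qed
  then have "measure_pmf.prob (mix_from_empty t) (UNIV - bounded_states c)
      \<le> measure_pmf.prob (mix_from_empty t) (\<Union>i<n. {s. Suc c \<le> s ! i})"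
    by (intro measure_pmf.finite_measure_mono_AE AE_pmfI) (auto dest: length_mix_from_empty)
  also have "\<dots> \<le> (\<Sum>i<n. measure_pmf.prob (mix_from_empty t) {s. Suc c \<le> s ! i})"
    by (rule measure_pmf.finite_measure_subadditive_finite) auto
  also have "\<dots> \<le> (\<Sum>i<n. load ^ Suc c)"
    by (intro sum_mono prob_mix_from_empty_queue_ge) simp
  finally show ?thesis
    using measure_pmf.prob_compl[of "bounded_states c" "mix_from_empty t"] by simp
qed

definition steady_limit :: "nat list pmf" where
  "steady_limit = embed_pmf (\<lambda>x. lim (\<lambda>t. pmf (mix_from_empty t) x))"

lemma pmf_steady_limit: "pmf steady_limit x = lim (\<lambda>t. pmf (mix_from_empty t) x)"
proof -
  have "(\<lambda>c. real n * load ^ Suc c) \<longlonglongrightarrow> 0"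
    using load_nonneg load_less_1 by (intro tendsto_mult_right_zero LIMSEQ_Suc LIMSEQ_power_zero) auto
  then have "(\<integral>\<^sup>+x. ennreal (lim (\<lambda>t. pmf (mix_from_empty t) x)) \<partial>count_space UNIV) = 1"
    by (intro nn_integral_tight_pmf_limit_eq_1[where \<mu>=mix_from_empty and B=bounded_states
        and e="\<lambda>c. real n * load ^ Suc c"] pmf_mix_from_empty_tendsto finite_bounded_states
        prob_mix_from_empty_bounded_states)
  moreover have "0 \<le> lim (\<lambda>t. pmf (mix_from_empty t) x)" for x
    by (rule LIMSEQ_le_const[OF pmf_mix_from_empty_tendsto]) auto
  ultimately show ?thesis
    unfolding steady_limit_def by (intro pmf_embed_pmf) auto
qed

lemma steady_state_steady_limit: "steady_state n k pa steady_limit"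
  unfolding steady_state_def
proof
  show "\<forall>s\<in>set_pmf steady_limit. length s = n"
  proof
    fix s assume "s \<in> set_pmf steady_limit"
    show "length s = n"
    proof (rule ccontr)
      assume "length s \<noteq> n"
      then have "(\<lambda>t. pmf (mix_from_empty t) s) = (\<lambda>t. 0)"
        by (metis length_mix_from_empty pmf_eq_0_set_pmf)
      then have "pmf steady_limit s = 0" by (simp add: pmf_steady_limit)
      with \<open>s \<in> set_pmf steady_limit\<close> show False by (simp add: set_pmf_iff)
    qed
  qed
  show "bind_pmf steady_limit (mix_step n k pa) = steady_limit"
    by (rule stationary_of_pmf_limit[where \<mu>=mix_from_empty,
          OF _ mix_from_empty_Suc finite_mix_step_predecessors])
       (simp add: pmf_steady_limit pmf_mix_from_empty_tendsto)
qed

end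

theorem theorem3:
  fixes n k :: nat and lam pa :: real
  assumes "2 \<le> k" and "k \<le> n - 1" and "lam > 0" and "0 \<le> pa" and "pa \<le> 1"
  shows "(\<exists>\<pi>. steady_state n k pa \<pi>) \<and>
    (\<forall>\<pi>. steady_state n k pa \<pi> \<longrightarrow>
       (\<forall>i<n. queue_load \<pi> i = (1 - pa) / (real k - pa)) \<and>
       summable (in_mix_prob n k pa \<pi>) \<and>
       mean_delay n k lam pa \<pi> = (1 - pa) / (lam * (real k - 1)))"
proof -
  interpret sampling_mix n k pa
    using assms by unfold_locales auto
  show ?thesis
    using steady_state_steady_limit queue_load_steady_state mean_delay_steady_state[OF _ assms(3)]
    by (auto simp: load_def)
qed

end
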